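(* Fix an integer $K\ge0$, $\kappa\ge2$ and $a\in\,]0,\infty[$. Consider the regime $\ell\to\infty$, $q\to0$, $\ell q\to a$. For all $\ell$ large enough and $q$ small enough (with $\ell q$ close enough to $a$), the matrix $(M^{K+1}_H(b,c))_{0\le b,c\le\ell}$ is stochastic (nonnegative entries, rows summing to $1$), and $$\forall b,c\in\{0,\dots,\ell\}\qquad \sum_{h=0}^c M_H(b,h)\le\sum_{h=0}^c M^{K+1}_H(b,h).$$ Equivalently, the quantile maps satisfy $\mathcal M'_H(b,u)\ge\mathcal M^{K+1}_H(b,u)$ for all $b\in\{0,\dots,\ell\}$, $u\in[0,1]$.
   Context: Let $q\in\,]0,1-1/\kappa[$ and $p=\kappa q/(\kappa-1)$. The lumped mutation matrix on Hamming classes $\{0,\dots,\ell\}$ is $$M_H(b,c)=\sum_{\substack{0\le k\le\ell-b,\ 0\le l\le b\\ k-l=c-b}}\binom{\ell-b}{k}\binom{b}{l}\Big(p\big(1-\tfrac1\kappa\big)\Big)^k\Big(1-p\big(1-\tfrac1\kappa\big)\Big)^{\ell-b-k}\Big(\frac p\kappa\Big)^l\Big(1-\frac p\kappa\Big)^{b-l}.$$ Assume $K+2\le\ell$. The modified matrix $M^{K+1}_H$ is defined as follows. For $b\in\{0,\dots,K+1\}$: $M^{K+1}_H(b,c)=M_H(c+1,c)$ if $0\le c<b$; $M^{K+1}_H(b,c)=M_H(b,c)$ if $b\le c\le K$; $M^{K+1}_H(b,c)=0$ if $K+2\le c\le\ell$; and $M^{K+1}_H(b,K+1)=1-\sum_{h=0}^{b-1}M_H(h+1,h)-\sum_{h=b}^KM_H(b,h)$.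 For $b\in\{K+2,\dots,\ell\}$: $M^{K+1}_H(b,c)=M_H(b,c)$ for all $c$. For $b\in\{0,\dots,\ell\}$, $u\in[0,1]$, $\mathcal M'_H(b,u)$ is the unique $c$ with $\sum_{h<c}M_H(b,h)<u\le\sum_{h\le c}M_H(b,h)$, and $\mathcal M^{K+1}_H(b,u)$ is defined in the same way with $M^{K+1}_H$ in place of $M_H$. *)

theory Defs
  imports Complex_Main
begin

definition pmut :: "nat \<Rightarrow> real \<Rightarrow> real" where
  "pmut \<kappa> q = real \<kappa> * q / (real \<kappa> - 1)"

text \<open>Lumped mutation matrix M_H(b,c) on Hamming classes {0..ell}.\<close>
definition MH :: "nat \<Rightarrow> nat \<Rightarrow> real \<Rightarrow> nat \<Rightarrow> nat \<Rightarrow> real" where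
  "MH \<kappa> ell q b c =
     (let p = pmut \<kappa> q in
      \<Sum>k\<in>{0..ell - b}. \<Sum>l\<in>{0..b}.
        if int k - int l = int c - int b then
          real ((ell - b) choose k) * real (b choose l)
          * (p * (1 - 1 / real \<kappa>)) ^ k * (1 - p * (1 - 1 / real \<kappa>)) ^ (ell - b - k)
          * (p / real \<kappa>) ^ l * (1 - p / real \<kappa>) ^ (b - l)
        else 0)"

definition MHK :: "nat \<Rightarrow> nat \<Rightarrow> real \<Rightarrow> nat \<Rightarrow> nat \<Rightarrow> nat \<Rightarrow> real" where
  "MHK \<kappa> ell q K b c =
     (if b \<le> K + 1 then
        (if c < b then MH \<kappa> ell q (c + 1) c
         else if c \<le> K then MH \<kappa> ell q b c
         else if c = K + 1 then
           1 - (\<Sum>h<b. MH \<kappa> ell q (h + 1) h) - (\<Sum>h\<in>{b..K}. MH \<kappa> ell q b h)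
         else 0)
      else MH \<kappa> ell q b c)"

definition quant :: "(nat \<Rightarrow> nat \<Rightarrow> real) \<Rightarrow> nat \<Rightarrow> nat \<Rightarrow> real \<Rightarrow> nat" where
  "quant M ell b u = (THE c. c \<le> ell \<and> (\<Sum>h<c. M b h) < u \<and> u \<le> (\<Sum>h\<le>c. M b h))"

end

theory Submission
  imports Defs "HOL-Analysis.Weierstrass_Theorems"
begin

text \<open>
  \<open>M\<^sub>H(b, \<cdot>)\<close> is the law of \<open>b + X - Y\<close> with \<open>X ~ Bin(\<ell> - b, q)\<close> forward and
  \<open>Y ~ Bin(b, \<beta>)\<close> back mutations, \<open>\<beta> = q / (\<kappa> - 1)\<close>. When \<open>\<ell> q \<approx> a\<close>, the number of
  forward mutations is of order one, while each back mutation costs a factor \<open>\<beta>\<close>.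
  For \<open>b \<le> K + 1\<close>, falling below class \<open>b - 1\<close> needs two back mutations, so the cumulative
  mass there is \<open>O(\<beta>\<^sup>2)\<close>, whereas every subdiagonal entry \<open>M\<^sub>H(h + 1, h)\<close> is of order \<open>\<beta>\<close>:
  this gives the dominance of the cumulative sums below the diagonal. The entry \<open>M\<^sub>H(b, K + 1)\<close>
  stays bounded below by a constant, which absorbs the \<open>O(\<beta>)\<close> total of subdiagonal entries
  moved into row \<open>b\<close>, so the modified rows remain stochastic. Dominance of cumulative sums
  finally reverses the quantile maps.
\<close>

lemma quant_spec:
  fixes M :: "nat \<Rightarrow> nat \<Rightarrow> real"
  assumes nonneg: "\<And>h. h \<le> ell \<Longrightarrow> 0 \<le> M b h" and row: "(\<Sum>h\<le>ell. M b h) = 1"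
    and "0 < u" "u \<le> 1"
  shows "quant M ell b u \<le> ell \<and> (\<Sum>h<quant M ell b u. M b h) < u \<and> u \<le> (\<Sum>h\<le>quant M ell b u. M b h)"
proof -
  let ?P = "\<lambda>c. c \<le> ell \<and> (\<Sum>h<c. M b h) < u \<and> u \<le> (\<Sum>h\<le>c. M b h)"
  have cumsum_mono: "(\<Sum>h\<le>c. M b h) \<le> (\<Sum>h<c'. M b h)" if "c < c'" "c' \<le> ell" for c c'
    using that nonneg by (intro sum_mono2) auto
  have "\<exists>!c. ?P c"
  proof (rule ex_ex1I)
    define c0 where "c0 = (LEAST c. u \<le> (\<Sum>h\<le>c. M b h))"
    have reach: "u \<le> (\<Sum>h\<le>ell. M b h)" using row assms(4) by simp
    have "(\<Sum>h<c0. M b h) < u"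
    proof (cases c0)
      case (Suc c)
      then have "\<not> u \<le> (\<Sum>h\<le>c. M b h)" unfolding c0_def by (intro not_less_Least) simp
      then show ?thesis using Suc by (simp add: lessThan_Suc_atMost)
    qed (use assms(3) in simp)
    moreover have "c0 \<le> ell" "u \<le> (\<Sum>h\<le>c0. M b h)"
      unfolding c0_def using reach by (auto intro: Least_le LeastI)
    ultimately show "\<exists>c. ?P c" by blast
  next
    fix c c' assume "?P c" "?P c'"
    then show "c = c'" using cumsum_mono[of c c'] cumsum_mono[of c' c]
      by (cases c c' rule: linorder_cases) auto
  qed
  then show ?thesis unfolding quant_def by (rule theI')
qed

lemma quant_antimono:
  fixes M M' :: "nat \<Rightarrow> nat \<Rightarrow> real"
  assumes "\<And>h. h \<le> ell \<Longrightarrow> 0 \<le> M b h" "(\<Sum>h\<le>ell. M b h) = 1"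
    and "\<And>h. h \<le> ell \<Longrightarrow> 0 \<le> M' b h" "(\<Sum>h\<le>ell. M' b h) = 1"
    and dom: "\<And>c. c \<le> ell \<Longrightarrow> (\<Sum>h\<le>c. M b h) \<le> (\<Sum>h\<le>c. M' b h)"
    and "0 < u" "u \<le> 1"
  shows "quant M' ell b u \<le> quant M ell b u"
proof (rule ccontr)
  let ?c = "quant M ell b u" and ?c' = "quant M' ell b u"
  assume "\<not> ?c' \<le> ?c"
  have c: "?c \<le> ell" "u \<le> (\<Sum>h\<le>?c. M b h)" using quant_spec[of ell M b u] assms by auto
  have c': "?c' \<le> ell" "(\<Sum>h<?c'. M' b h) < u" using quant_spec[of ell M' b u] assms by auto
  have "(\<Sum>h\<le>?c. M' b h) \<le> (\<Sum>h<?c'. M' b h)"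
    using \<open>\<not> ?c' \<le> ?c\<close> c'(1) assms(3) by (intro sum_mono2) auto
  then show False using c c' dom[OF c(1)] by linarith
qed

lemma sum_atMost_split:
  assumes "m \<le> Suc c"
  shows "(\<Sum>h\<le>c. f h) = (\<Sum>h<m. f h) + (\<Sum>h\<in>{m..c}. f h)"
proof -
  have "{..c} = {..<m} \<union> {m..c}" using assms by auto
  then show ?thesis by (simp add: sum.union_disjoint[symmetric] ivl_disj_int_one)
qed

lemma exp_le_one_minus_power:
  fixes q :: real
  assumes "0 \<le> q" "q \<le> 1 / 2"
  shows "exp (- 2 * q * real n) \<le> (1 - q) ^ n"
proof -
  have "- q - 2 * q\<^sup>2 \<le> ln (1 - q)" using assms by (rule ln_one_minus_pos_lower_bound)
  moreover have "q * (2 * q) \<le> q * 1" using assms by (intro mult_left_mono) auto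
  ultimately have "- 2 * q * real n \<le> real n * ln (1 - q)"
    using mult_left_mono[of "- 2 * q" "ln (1 - q)" "real n"] by (simp add: power2_eq_square mult_ac)
  then have "exp (- 2 * q * real n) \<le> exp (real n * ln (1 - q))" by simp
  also have "\<dots> = (1 - q) ^ n" using assms by (simp add: exp_of_nat_mult)
  finally show ?thesis .
qed

lemma power_le_choose_mul_power:
  fixes d q :: real
  assumes "m \<le> n" "0 \<le> d" "d \<le> real n * q / real m" "0 \<le> q"
  shows "d ^ m \<le> real (n choose m) * q ^ m"
proof -
  have "d ^ m \<le> (real n * q / real m) ^ m" using assms(3,2) by (rule power_mono)
  also have "\<dots> = (real n / real m) ^ m * q ^ m" by (simp add: power_mult_distrib[symmetric])
  also have "\<dots> \<le> real (n choose m) * q ^ m"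
    using binomial_ge_n_over_k_pow_k[OF assms(1)] assms(4) by (intro mult_right_mono) auto
  finally show ?thesis .
qed

lemma min_power_le_choose_mul_power:
  fixes c q :: real
  assumes "m \<le> M" "m \<le> n" "0 < c" "c \<le> real n * q" "0 \<le> q"
  shows "min 1 (c / real M) ^ M \<le> real (n choose m) * q ^ m"
proof (cases "m = 0")
  case False
  define d where "d = min 1 (c / real M)"
  have d: "0 \<le> d" "d \<le> 1" using assms(3) by (auto simp: d_def)
  have "d \<le> c / real M" by (simp add: d_def)
  also have "\<dots> \<le> c / real m" using False assms(1,3) by (intro divide_left_mono) auto
  also have "\<dots> \<le> real n * q / real m" using assms(4) by (rule divide_right_mono) simp
  finally have "d ^ m \<le> real (n choose m) * q ^ m"
    using assms(2,5) d by (intro power_le_choose_mul_power) auto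
  moreover have "d ^ M \<le> d ^ m" using d assms(1) by (intro power_decreasing) auto
  ultimately show ?thesis by (simp add: d_def)
qed (use assms(3) in \<open>simp add: power_le_one\<close>)

text \<open>With \<open>p = \<kappa> q / (\<kappa> - 1)\<close>, a site agreeing with the master sequence mutates away with
  probability \<open>p (1 - 1 / \<kappa>) = q\<close>, and a differing site mutates back with probability
  \<open>p / \<kappa> = back_rate \<kappa> q\<close>.\<close>

definition back_rate :: "nat \<Rightarrow> real \<Rightarrow> real" where
  "back_rate \<kappa> q = q / (real \<kappa> - 1)"

lemma back_rate_bounds:
  assumes "\<kappa> \<ge> 2" "0 \<le> q"
  shows "0 \<le> back_rate \<kappa> q" "back_rate \<kappa> q \<le> q"
proof -
  have "1 \<le> real \<kappa> - 1" using assms(1) by simp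
  moreover from this have "q \<le> q * (real \<kappa> - 1)"
    using assms(2) by (metis mult_left_mono mult.right_neutral)
  ultimately show "0 \<le> back_rate \<kappa> q" "back_rate \<kappa> q \<le> q"
    using assms(2) by (auto simp: back_rate_def pos_divide_le_eq)
qed

lemma Bernstein_tail_le:
  assumes "0 \<le> x" "x \<le> 1"
  shows "(\<Sum>k\<in>{m..n}. Bernstein n k x) \<le> 2 ^ n * x ^ m"
proof -
  have "(\<Sum>k\<in>{m..n}. Bernstein n k x) \<le> (\<Sum>k\<in>{m..n}. real (n choose k) * x ^ m)"
  proof (rule sum_mono)
    fix k assume "k \<in> {m..n}"
    then have "x ^ k \<le> x ^ m" using assms by (simp add: power_decreasing)
    moreover have "(1 - x) ^ (n - k) \<le> 1" using assms by (simp add: power_le_one)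
    ultimately have "x ^ k * (1 - x) ^ (n - k) \<le> x ^ m"
      using assms mult_left_le[of "(1 - x) ^ (n - k)" "x ^ k"] by simp
    then show "Bernstein n k x \<le> real (n choose k) * x ^ m"
      by (simp add: Bernstein_def mult.assoc mult_left_mono)
  qed
  also have "\<dots> \<le> (\<Sum>k\<le>n. real (n choose k) * x ^ m)"
    using assms by (intro sum_mono2) auto
  also have "\<dots> = 2 ^ n * x ^ m"
    by (simp add: sum_distrib_right[symmetric] flip: of_nat_sum choose_row_sum)
  finally show ?thesis .
qed

lemma MH_eq_convolution:
  assumes "\<kappa> \<ge> 2"
  shows "MH \<kappa> ell q b c = (\<Sum>k\<le>ell - b. \<Sum>l\<le>b.
    if b + k - l = c then Bernstein (ell - b) k q * Bernstein b l (back_rate \<kappa> q) else 0)"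
proof -
  have "real \<kappa> \<noteq> 0" "real \<kappa> - 1 \<noteq> 0" using assms by auto
  then have p: "pmut \<kappa> q * (1 - 1 / real \<kappa>) = q" "pmut \<kappa> q / real \<kappa> = back_rate \<kappa> q"
    by (auto simp: pmut_def back_rate_def field_simps)
  have "(int k - int l = int c - int b) = (b + k - l = c)" if "l \<le> b" for k l
    using that by auto
  then show ?thesis
    unfolding MH_def Let_def p atLeast0AtMost Bernstein_def
    by (intro sum.cong refl) (simp add: mult_ac)
qed

lemma MH_sum_eq:
  assumes "\<kappa> \<ge> 2" "finite S"
  shows "(\<Sum>c\<in>S. MH \<kappa> ell q b c) = (\<Sum>k\<le>ell - b. \<Sum>l\<le>b.
    if b + k - l \<in> S then Bernstein (ell - b) k q * Bernstein b l (back_rate \<kappa> q) else 0)"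
  using assms(2)
  by (simp add: MH_eq_convolution[OF assms(1)] sum.swap[where A = S] sum.swap[where B = "{..b}"])

lemma MH_nonneg:
  assumes "\<kappa> \<ge> 2" "0 \<le> q" "q \<le> 1"
  shows "0 \<le> MH \<kappa> ell q b c"
  using back_rate_bounds[OF assms(1,2)] assms(3)
  by (auto simp: MH_eq_convolution[OF assms(1)]
      intro!: sum_nonneg mult_nonneg_nonneg Bernstein_nonneg assms)

lemma MH_row_sum:
  assumes "\<kappa> \<ge> 2" "b \<le> ell"
  shows "(\<Sum>c\<le>ell. MH \<kappa> ell q b c) = 1"
proof -
  have "(\<Sum>c\<le>ell. MH \<kappa> ell q b c)
      = (\<Sum>k\<le>ell - b. \<Sum>l\<le>b. Bernstein (ell - b) k q * Bernstein b l (back_rate \<kappa> q))"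
    using assms(2) unfolding MH_sum_eq[OF assms(1) finite_atMost] by (intro sum.cong refl) auto
  also have "\<dots> = 1" by (simp add: sum_product[symmetric])
  finally show ?thesis .
qed

lemma MH_sum_le_one:
  assumes "\<kappa> \<ge> 2" "0 \<le> q" "q \<le> 1" "b \<le> ell" "S \<subseteq> {..ell}"
  shows "(\<Sum>c\<in>S. MH \<kappa> ell q b c) \<le> 1"
proof -
  have "(\<Sum>c\<in>S. MH \<kappa> ell q b c) \<le> (\<Sum>c\<le>ell. MH \<kappa> ell q b c)"
    using assms by (intro sum_mono2) (auto intro: MH_nonneg)
  then show ?thesis using MH_row_sum[OF assms(1,4)] by simp
qed

text \<open>Here \<open>k\<close> counts forward and \<open>l\<close> back mutations: the hypothesis says that \<open>S\<close> is reached
  from \<open>b\<close> only through at least \<open>m\<close> back mutations.\<close>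

lemma MH_sum_le_back_tail:
  assumes "\<kappa> \<ge> 2" "0 \<le> q" "q \<le> 1" "finite S"
    and reach: "\<And>k l. l \<le> b \<Longrightarrow> b + k - l \<in> S \<Longrightarrow> m \<le> l"
  shows "(\<Sum>c\<in>S. MH \<kappa> ell q b c) \<le> 2 ^ b * back_rate \<kappa> q ^ m"
proof -
  define \<beta> where "\<beta> = back_rate \<kappa> q"
  have \<beta>: "0 \<le> \<beta>" "\<beta> \<le> 1" using back_rate_bounds[OF assms(1,2)] assms(3) by (auto simp: \<beta>_def)
  have "(\<Sum>c\<in>S. MH \<kappa> ell q b c) = (\<Sum>k\<le>ell - b. \<Sum>l\<le>b.
      if b + k - l \<in> S then Bernstein (ell - b) k q * Bernstein b l \<beta> else 0)"
    unfolding \<beta>_def by (rule MH_sum_eq[OF assms(1,4)])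
  also have "\<dots> \<le> (\<Sum>k\<le>ell - b. \<Sum>l\<le>b. Bernstein (ell - b) k q * (if m \<le> l then Bernstein b l \<beta> else 0))"
    using reach \<beta> assms(2,3)
    by (intro sum_mono) (auto intro!: mult_nonneg_nonneg Bernstein_nonneg)
  also have "\<dots> = (\<Sum>l\<in>{m..b}. Bernstein b l \<beta>)"
    by (simp add: sum_product[symmetric] sum.inter_filter[symmetric] atLeastAtMost_def Int_def conj_commute)
  also have "\<dots> \<le> 2 ^ b * \<beta> ^ m" by (rule Bernstein_tail_le[OF \<beta>])
  finally show ?thesis unfolding \<beta>_def .
qed

lemma MH_sum_ge_term:
  assumes "\<kappa> \<ge> 2" "0 \<le> q" "q \<le> 1" "finite S"
    and "k \<le> ell - b" "l \<le> b" "b + k - l \<in> S"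
  shows "Bernstein (ell - b) k q * Bernstein b l (back_rate \<kappa> q) \<le> (\<Sum>c\<in>S. MH \<kappa> ell q b c)"
proof -
  define g where "g k l = (if b + k - l \<in> S
    then Bernstein (ell - b) k q * Bernstein b l (back_rate \<kappa> q) else 0)" for k l
  have g_nonneg: "0 \<le> g k l" for k l
    using back_rate_bounds[OF assms(1,2)] assms(2,3)
    by (auto simp: g_def intro!: mult_nonneg_nonneg Bernstein_nonneg)
  have "Bernstein (ell - b) k q * Bernstein b l (back_rate \<kappa> q) = g k l"
    using assms(7) by (simp add: g_def)
  also have "\<dots> \<le> (\<Sum>l\<le>b. g k l)"
    using assms(6) g_nonneg by (intro member_le_sum) auto
  also have "\<dots> \<le> (\<Sum>k\<le>ell - b. \<Sum>l\<le>b. g k l)"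
    using assms(5) g_nonneg by (intro member_le_sum[where f = "\<lambda>k. \<Sum>l\<le>b. g k l"] sum_nonneg) auto
  also have "\<dots> = (\<Sum>c\<in>S. MH \<kappa> ell q b c)"
    unfolding g_def by (rule MH_sum_eq[OF assms(1,4), symmetric])
  finally show ?thesis .
qed

lemma MHK_below_level:
  "b \<le> K + 1 \<Longrightarrow> h \<le> K \<Longrightarrow>
    MHK \<kappa> ell q K b h = (if h < b then MH \<kappa> ell q (h + 1) h else MH \<kappa> ell q b h)"
  by (simp add: MHK_def)

lemma MHK_beyond_level: "b \<le> K + 1 \<Longrightarrow> K + 1 < h \<Longrightarrow> MHK \<kappa> ell q K b h = 0"
  by (simp add: MHK_def)

lemma MHK_eq_MH: "K + 1 < b \<Longrightarrow> MHK \<kappa> ell q K b = MH \<kappa> ell q b"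
  by (simp add: MHK_def fun_eq_iff)

lemma MHK_cumsum_below_level:
  assumes "b \<le> K + 1" "c \<le> K"
  shows "(\<Sum>h\<le>c. MHK \<kappa> ell q K b h)
    = (\<Sum>h<min b (Suc c). MH \<kappa> ell q (h + 1) h) + (\<Sum>h\<in>{b..c}. MH \<kappa> ell q b h)"
proof -
  have "(\<Sum>h<min b (Suc c). MHK \<kappa> ell q K b h) = (\<Sum>h<min b (Suc c). MH \<kappa> ell q (h + 1) h)"
    using assms by (intro sum.cong) (auto simp: MHK_below_level)
  moreover have "(\<Sum>h\<in>{min b (Suc c)..c}. MHK \<kappa> ell q K b h) = (\<Sum>h\<in>{b..c}. MH \<kappa> ell q b h)"
    using assms by (intro sum.cong) (auto simp: MHK_below_level)
  ultimately show ?thesis by (simp add: sum_atMost_split[of "min b (Suc c)"])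
qed

lemma MHK_cumsum_above_level:
  assumes "b \<le> K + 1" "K + 1 \<le> c"
  shows "(\<Sum>h\<le>c. MHK \<kappa> ell q K b h) = 1"
proof -
  have "(\<Sum>h\<le>c. MHK \<kappa> ell q K b h) = (\<Sum>h\<le>K + 1. MHK \<kappa> ell q K b h)"
    using assms by (intro sum.mono_neutral_right) (auto simp: MHK_beyond_level)
  also have "\<dots> = (\<Sum>h\<le>K. MHK \<kappa> ell q K b h) + MHK \<kappa> ell q K b (K + 1)" by simp
  also have "\<dots> = 1"
    using assms(1) by (simp add: MHK_cumsum_below_level min_absorb1) (simp add: MHK_def)
  finally show ?thesis .
qed

text \<open>\<open>E\<close> and \<open>D\<close> are lower bounds, uniform in the regime, for the probability of no forward
  mutation and for the binomial weight of reaching class \<open>K + 1\<close> by forward mutations only.\<close>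

locale dominance_regime =
  fixes \<kappa> K ell :: nat and q E D :: real
  assumes kappa_ge_2: "\<kappa> \<ge> 2"
    and q_nonneg: "0 \<le> q" and q_le_1: "q \<le> 1"
    and ell_ge: "K + 2 \<le> ell"
    and E_pos: "0 < E" and E_le: "E \<le> (1 - q) ^ ell"
    and no_back_ge: "1 / 2 \<le> (1 - back_rate \<kappa> q) ^ (K + 1)"
    and D_pos: "0 < D" and D_le_1: "D \<le> 1"
    and D_le: "\<And>b. b \<le> K + 1 \<Longrightarrow> D \<le> real ((ell - b) choose (K + 1 - b)) * q ^ (K + 1 - b)"
    and back_rate_small: "real (K + 1) * 2 ^ (K + 1) * back_rate \<kappa> q \<le> D * E / 2"
begin

abbreviation \<beta> where "\<beta> \<equiv> back_rate \<kappa> q"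

lemma \<beta>_bounds: "0 \<le> \<beta>" "\<beta> \<le> 1"
  using back_rate_bounds[OF kappa_ge_2 q_nonneg] q_le_1 by auto

lemmas MH_nonneg_regime = MH_nonneg[OF kappa_ge_2 q_nonneg q_le_1]

lemma E_le_power: "n \<le> ell \<Longrightarrow> E \<le> (1 - q) ^ n"
  using E_le power_decreasing[of n ell "1 - q"] q_nonneg q_le_1 by simp

lemma half_le_no_back: "n \<le> K + 1 \<Longrightarrow> 1 / 2 \<le> (1 - \<beta>) ^ n"
  using no_back_ge power_decreasing[of n "K + 1" "1 - \<beta>"] \<beta>_bounds by simp

lemma subdiagonal_ge:
  assumes "h \<le> K"
  shows "\<beta> * E / 2 \<le> MH \<kappa> ell q (h + 1) h"
proof -
  have "E \<le> Bernstein (ell - (h + 1)) 0 q"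
    using E_le_power[of "ell - (h + 1)"] by (simp add: Bernstein_def)
  moreover have "\<beta> / 2 \<le> Bernstein (h + 1) 1 \<beta>"
  proof -
    have "\<beta> / 2 \<le> \<beta> * (1 - \<beta>) ^ h"
      using half_le_no_back[of h] assms \<beta>_bounds mult_left_mono[of "1 / 2" _ \<beta>] by simp
    also have "\<dots> \<le> real (h + 1) * (\<beta> * (1 - \<beta>) ^ h)"
      using \<beta>_bounds mult_right_mono[of 1 "real (h + 1)" "\<beta> * (1 - \<beta>) ^ h"] by simp
    finally show ?thesis by (simp add: Bernstein_def mult_ac)
  qed
  ultimately have "E * (\<beta> / 2) \<le> Bernstein (ell - (h + 1)) 0 q * Bernstein (h + 1) 1 \<beta>"
    using E_pos \<beta>_bounds by (intro mult_mono) auto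
  also have "\<dots> \<le> (\<Sum>c\<in>{h}. MH \<kappa> ell q (h + 1) c)"
    by (intro MH_sum_ge_term[OF kappa_ge_2 q_nonneg q_le_1]) auto
  finally show ?thesis by (simp add: mult.commute)
qed

lemma subdiagonal_le:
  assumes "h \<le> K"
  shows "MH \<kappa> ell q (h + 1) h \<le> 2 ^ (K + 1) * \<beta>"
proof -
  have "(\<Sum>c\<in>{h}. MH \<kappa> ell q (h + 1) c) \<le> 2 ^ (h + 1) * \<beta> ^ 1"
    by (intro MH_sum_le_back_tail[OF kappa_ge_2 q_nonneg q_le_1]) auto
  moreover have "(2::real) ^ (h + 1) * \<beta> \<le> 2 ^ (K + 1) * \<beta>"
    using assms \<beta>_bounds by (intro mult_right_mono power_increasing) auto
  ultimately show ?thesis by simp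
qed

lemma level_entry_ge:
  assumes "b \<le> K + 1"
  shows "D * E / 2 \<le> MH \<kappa> ell q b (K + 1)"
proof -
  have "D * E \<le> Bernstein (ell - b) (K + 1 - b) q"
    using D_le[OF assms] E_le_power[of "ell - b - (K + 1 - b)"] D_pos E_pos
    by (simp add: Bernstein_def mult_mono)
  moreover have "1 / 2 \<le> Bernstein b 0 \<beta>"
    using half_le_no_back[OF assms] by (simp add: Bernstein_def)
  ultimately have "D * E * (1 / 2) \<le> Bernstein (ell - b) (K + 1 - b) q * Bernstein b 0 \<beta>"
    using D_pos E_pos q_nonneg q_le_1 by (intro mult_mono Bernstein_nonneg) auto
  also have "\<dots> \<le> (\<Sum>c\<in>{K + 1}. MH \<kappa> ell q b c)"
    using assms ell_ge by (intro MH_sum_ge_term[OF kappa_ge_2 q_nonneg q_le_1]) auto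
  finally show ?thesis by simp
qed

text \<open>Dropping from class \<open>b\<close> to a class below \<open>b - 1\<close> takes at least two back mutations.\<close>

lemma cumsum_two_below_le:
  assumes "n < b" "b \<le> K + 1"
  shows "(\<Sum>h<n. MH \<kappa> ell q b h) \<le> \<beta> * E / 2"
proof -
  have "(\<Sum>h<n. MH \<kappa> ell q b h) \<le> 2 ^ b * \<beta> ^ 2"
    using assms(1) by (intro MH_sum_le_back_tail[OF kappa_ge_2 q_nonneg q_le_1]) auto
  also have "\<dots> \<le> \<beta> * (real (K + 1) * 2 ^ (K + 1) * \<beta>)"
  proof -
    have "(2::real) ^ b \<le> 2 ^ (K + 1)"
      using assms(2) by (intro power_increasing) auto
    also have "\<dots> \<le> real (K + 1) * 2 ^ (K + 1)"
      by (simp add: mult_le_cancel_right1)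
    finally have "(2::real) ^ b \<le> real (K + 1) * 2 ^ (K + 1)" .
    then have "2 ^ b * (\<beta> * \<beta>) \<le> (real (K + 1) * 2 ^ (K + 1)) * (\<beta> * \<beta>)"
      by (rule mult_right_mono) simp
    then show ?thesis by (simp add: power2_eq_square mult_ac)
  qed
  also have "\<dots> \<le> \<beta> * (E / 2)"
  proof -
    have "D * E \<le> E" using D_le_1 E_pos by (simp add: mult_le_cancel_right1)
    then show ?thesis using back_rate_small \<beta>_bounds by (intro mult_left_mono) auto
  qed
  finally show ?thesis by simp
qed

lemma cumsum_le_subdiagonal_cumsum:
  assumes "n \<le> b" "b \<le> K + 1"
  shows "(\<Sum>h<n. MH \<kappa> ell q b h) \<le> (\<Sum>h<n. MH \<kappa> ell q (h + 1) h)"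
proof -
  have strict: "(\<Sum>h<m. MH \<kappa> ell q b h) \<le> (\<Sum>h<m. MH \<kappa> ell q (h + 1) h)" if "m < b" for m
  proof (cases m)
    case (Suc c)
    have "(\<Sum>h<m. MH \<kappa> ell q b h) \<le> \<beta> * E / 2" using cumsum_two_below_le that assms(2) .
    also have "\<dots> \<le> MH \<kappa> ell q (c + 1) c" using subdiagonal_ge Suc that assms(2) by simp
    also have "\<dots> \<le> (\<Sum>h<m. MH \<kappa> ell q (h + 1) h)"
      using Suc by (intro member_le_sum[where f = "\<lambda>h. MH \<kappa> ell q (h + 1) h"] MH_nonneg_regime) auto
    finally show ?thesis .
  qed simp
  show ?thesis
  proof (cases "n < b")
    case False
    with assms(1) have "n = b" by simp
    then show ?thesis using strict[of "b - 1"] by (cases b) simp_all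
  qed (rule strict)
qed

lemma level_remainder_nonneg:
  assumes "b \<le> K + 1"
  shows "0 \<le> 1 - (\<Sum>h<b. MH \<kappa> ell q (h + 1) h) - (\<Sum>h\<in>{b..K}. MH \<kappa> ell q b h)"
proof -
  have "(\<Sum>h\<in>{b..K}. MH \<kappa> ell q b h) + MH \<kappa> ell q b (K + 1) = (\<Sum>h\<in>{b..K + 1}. MH \<kappa> ell q b h)"
    using assms by (simp add: sum.cl_ivl_Suc)
  also have "\<dots> \<le> 1"
    using assms ell_ge by (intro MH_sum_le_one[OF kappa_ge_2 q_nonneg q_le_1]) auto
  finally have "(\<Sum>h\<in>{b..K}. MH \<kappa> ell q b h) + MH \<kappa> ell q b (K + 1) \<le> 1" .
  moreover have "(\<Sum>h<b. MH \<kappa> ell q (h + 1) h) \<le> real b * (2 ^ (K + 1) * \<beta>)"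
    using sum_bounded_above[of "{..<b}" "\<lambda>h. MH \<kappa> ell q (h + 1) h"] subdiagonal_le assms by force
  moreover have "real b * (2 ^ (K + 1) * \<beta>) \<le> real (K + 1) * 2 ^ (K + 1) * \<beta>"
    using assms \<beta>_bounds mult_right_mono[of "real b" "real (K + 1)" "2 ^ (K + 1) * \<beta>"] by simp
  ultimately show ?thesis using back_rate_small level_entry_ge[OF assms] by linarith
qed

lemma MHK_nonneg: "0 \<le> MHK \<kappa> ell q K b c"
  using level_remainder_nonneg[of b] by (simp add: MHK_def MH_nonneg_regime)

lemma MHK_row_sum:
  assumes "b \<le> ell"
  shows "(\<Sum>c\<le>ell. MHK \<kappa> ell q K b c) = 1"
proof (cases "b \<le> K + 1")
  case True then show ?thesis using MHK_cumsum_above_level ell_ge by simp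
next
  case False then show ?thesis using MHK_eq_MH MH_row_sum[OF kappa_ge_2 assms] by simp
qed

lemma MH_cumsum_le_MHK_cumsum:
  assumes "b \<le> ell" "c \<le> ell"
  shows "(\<Sum>h\<le>c. MH \<kappa> ell q b h) \<le> (\<Sum>h\<le>c. MHK \<kappa> ell q K b h)"
proof (cases "b \<le> K + 1")
  case False
  then show ?thesis by (simp add: MHK_eq_MH)
next
  case level: True
  show ?thesis
  proof (cases "c \<le> K")
    case True
    let ?m = "min b (Suc c)"
    have interval: "{?m..c} = {b..c}" by auto
    have "(\<Sum>h\<le>c. MH \<kappa> ell q b h) = (\<Sum>h<?m. MH \<kappa> ell q b h) + (\<Sum>h\<in>{b..c}. MH \<kappa> ell q b h)"
      using sum_atMost_split[of ?m c "MH \<kappa> ell q b", unfolded interval] by simp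
    also have "\<dots> \<le> (\<Sum>h<?m. MH \<kappa> ell q (h + 1) h) + (\<Sum>h\<in>{b..c}. MH \<kappa> ell q b h)"
      using cumsum_le_subdiagonal_cumsum[of ?m b] level by simp
    also have "\<dots> = (\<Sum>h\<le>c. MHK \<kappa> ell q K b h)"
      using MHK_cumsum_below_level[OF level True] by simp
    finally show ?thesis .
  next
    case False
    have "(\<Sum>h\<le>c. MH \<kappa> ell q b h) \<le> 1"
      using assms by (intro MH_sum_le_one[OF kappa_ge_2 q_nonneg q_le_1]) auto
    then show ?thesis using MHK_cumsum_above_level[OF level] False by simp
  qed
qed

lemma quant_MHK_le_quant_MH:
  assumes "b \<le> ell" "0 < u" "u \<le> 1"
  shows "quant (MHK \<kappa> ell q K) ell b u \<le> quant (MH \<kappa> ell q) ell b u"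
  using assms MH_row_sum[OF kappa_ge_2] MHK_row_sum MH_cumsum_le_MHK_cumsum
  by (intro quant_antimono[where ell = ell and b = b]) (auto intro: MH_nonneg_regime MHK_nonneg)

end

lemma dominance_regimeI:
  fixes \<kappa> K ell :: nat and a q :: real
  defines "E \<equiv> exp (- 3 * a)" and "D \<equiv> min 1 (a / (4 * real (K + 1))) ^ (K + 1)"
  assumes "\<kappa> \<ge> 2" "a > 0" "K + 2 \<le> ell" "0 < q"
    and Kq: "real (K + 1) * q \<le> a / 4" and ell_q: "\<bar>real ell * q - a\<bar> < a / 2"
    and small: "real (K + 1) * 2 ^ (K + 1) * q \<le> D * E / 2"
  shows "dominance_regime \<kappa> K ell q E D"
proof -
  have D: "0 < D" "D \<le> 1" unfolding D_def using assms(4) by (simp, intro power_le_one) auto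
  have E: "0 < E" "E \<le> 1" using assms(4) by (simp_all add: E_def)
  have "real (K + 1) * q \<le> real (K + 1) * 2 ^ (K + 1) * q"
    using assms(6) mult_left_mono[OF one_le_power[of "2::real" "K + 1"], of "real (K + 1) * q"]
    by (simp add: mult_ac)
  also have "\<dots> \<le> 1 / 2" using small D E mult_le_one[of D E] by linarith
  finally have Kq_half: "real (K + 1) * q \<le> 1 / 2" .
  moreover have "q \<le> real (K + 1) * q" using assms(6) by (simp add: distrib_right)
  ultimately have q_half: "q \<le> 1 / 2" by linarith
  have \<beta>: "0 \<le> back_rate \<kappa> q" "back_rate \<kappa> q \<le> q"
    using back_rate_bounds[OF assms(3)] assms(6) by auto
  show ?thesis
  proof
    have "real ell * q < 3 * a / 2" using ell_q[unfolded abs_less_iff] by linarith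
    then have "E \<le> exp (- 2 * q * real ell)" by (simp add: E_def mult_ac)
    then show "E \<le> (1 - q) ^ ell" using exp_le_one_minus_power[of q ell] assms(6) q_half by simp
  next
    have "1 - real (K + 1) * back_rate \<kappa> q \<le> (1 - back_rate \<kappa> q) ^ (K + 1)"
      using Bernoulli_inequality[of "- back_rate \<kappa> q" "K + 1"] \<beta> q_half by simp
    moreover have "real (K + 1) * back_rate \<kappa> q \<le> real (K + 1) * q" using \<beta> by simp
    ultimately show "1 / 2 \<le> (1 - back_rate \<kappa> q) ^ (K + 1)" using Kq_half by linarith
  next
    fix b assume b: "b \<le> K + 1"
    have "real b * q \<le> real (K + 1) * q" using b assms(6) by (intro mult_right_mono) auto
    moreover have "real (ell - b) * q = real ell * q - real b * q"
      using b assms(5) by (simp add: of_nat_diff left_diff_distrib)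
    ultimately have "a / 4 \<le> real (ell - b) * q" using ell_q[unfolded abs_less_iff] Kq by linarith
    then show "D \<le> real ((ell - b) choose (K + 1 - b)) * q ^ (K + 1 - b)"
      unfolding D_def using b assms(4,5,6)
        min_power_le_choose_mul_power[of "K + 1 - b" "K + 1" "ell - b" "a / 4" q]
      by (simp add: mult.commute)
  next
    have "real (K + 1) * 2 ^ (K + 1) * back_rate \<kappa> q \<le> real (K + 1) * 2 ^ (K + 1) * q"
      using \<beta> by (intro mult_left_mono) auto
    then show "real (K + 1) * 2 ^ (K + 1) * back_rate \<kappa> q \<le> D * E / 2" using small by linarith
  qed (use assms D E q_half in auto)
qed

theorem mainTheorem3:
  fixes K \<kappa> :: nat and a :: real
  assumes "\<kappa> \<ge> 2" and "a > 0"
  shows "\<exists>N::nat. \<exists>\<epsilon>>0. \<exists>\<delta>>0. \<forall>ell::nat. \<forall>q::real.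
           N \<le> ell \<and> 0 < q \<and> q < \<epsilon> \<and> \<bar>real ell * q - a\<bar> < \<delta> \<longrightarrow>
             (\<forall>b\<le>ell. \<forall>c\<le>ell. 0 \<le> MHK \<kappa> ell q K b c)
           \<and> (\<forall>b\<le>ell. (\<Sum>c\<le>ell. MHK \<kappa> ell q K b c) = 1)
           \<and> (\<forall>b\<le>ell. \<forall>c\<le>ell. (\<Sum>h\<le>c. MH \<kappa> ell q b h) \<le> (\<Sum>h\<le>c. MHK \<kappa> ell q K b h))
           \<and> (\<forall>b\<le>ell. \<forall>u. 0 < u \<and> u \<le> 1 \<longrightarrow>
                quant (MH \<kappa> ell q) ell b u \<ge> quant (MHK \<kappa> ell q K) ell b u)"
proof -
  define E where "E = exp (- 3 * a)"
  define D where "D = min 1 (a / (4 * real (K + 1))) ^ (K + 1)"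
  define C where "C = real (K + 1) * 2 ^ (K + 1)"
  define \<epsilon> where "\<epsilon> = min (a / (4 * real (K + 1))) (D * E / (2 * C))"
  have "0 < D" "0 < E" "0 < C" using assms(2) by (simp_all add: D_def E_def C_def)
  then have "0 < \<epsilon>" using assms(2) by (simp add: \<epsilon>_def)
  have regime: "dominance_regime \<kappa> K ell q E D"
    if "K + 2 \<le> ell" "0 < q" "q < \<epsilon>" "\<bar>real ell * q - a\<bar> < a / 2" for ell q
  proof -
    have "real (K + 1) * q \<le> a / 4" "C * q \<le> D * E / 2"
      using \<open>q < \<epsilon>\<close> \<open>0 < C\<close> by (auto simp: \<epsilon>_def field_simps)
    then show ?thesis
      unfolding E_def D_def using that assms by (intro dominance_regimeI) (auto simp: C_def)
  qed
  show ?thesis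
    using \<open>0 < \<epsilon>\<close> assms(2)
    by (intro exI[of _ "K + 2"] exI[of _ \<epsilon>] exI[of _ "a / 2"] conjI allI impI)
      (auto intro!: dominance_regime.MHK_nonneg[OF regime] dominance_regime.MHK_row_sum[OF regime]
        dominance_regime.MH_cumsum_le_MHK_cumsum[OF regime] dominance_regime.quant_MHK_le_quant_MH[OF regime])
qed

end
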